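(* Let $t\in\mathtt T_J$, $\mathtt D$ a list context, $\Gamma$ an environment, $\sigma$ a type and $n\in\mathbb N$. Then $\Gamma\vdash^n \mathtt D\langle\lambda x.t\rangle:\sigma$ is derivable in $\cap J$ if and only if $\Gamma\vdash^n \lambda x.\mathtt D\langle t\rangle:\sigma$ is derivable in $\cap J$ (where variables bound by $\mathtt D$ are distinct from $x$ and not free in... are chosen by $\alpha$-conversion so that $x$ does not occur in $\mathtt D$).
   Context: Terms $\mathtt T_J$: $t,u,r ::= x \mid \lambda x.t \mid t(u,y.r)$ ($y$ bound in $r$), up to $\alpha$-equivalence. List contexts $\mathtt D ::= \Diamond \mid t(u,y.\mathtt D)$. System $\cap J$: types $\sigma,\tau ::= \alpha \mid \mathcal M\to\sigma$, where $\mathcal M=[\sigma_i]_{i\in I}$ is a finite (possibly empty) multiset of types; $\sqcup$ is multiset union. Environments $\Gamma$ map variables to multisets, with finitely many non-empty; $\Gamma\wedge\Delta$ is pointwise multiset union; $\Gamma;x:\mathcal M$ extends $\Gamma$ (with $x\notin\mathrm{dom}\,\Gamma$). Choice operator: $\mathrm{ch}(\mathcal M)=\mathcal M$ if $\mathcal M\ne[\,]$, and $\mathrm{ch}([\,])=[\tau]$ for an arbitrary type $\tau$ chosen in each rule instance. Rules: (var) $x:[\sigma]\vdash x:\sigma$; (abs) from $\Gamma;x:\mathcal M\vdash t:\sigma$ infer $\Gamma\vdash\lambda x.t:\mathcal M\to\sigma$; (many) from $(\Gamma_i\vdash t:\sigma_i)_{i\in I}$ with $I\neq\emptyset$ infer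 $\wedge_{i\in I}\Gamma_i\vdash t:[\sigma_i]_{i\in I}$; (app) from $\Gamma\vdash t:\mathrm{ch}([\mathcal M_i\to\tau_i]_{i\in I})$, $\Delta\vdash u:\mathrm{ch}(\sqcup_{i\in I}\mathcal M_i)$ and $\Lambda;y:[\tau_i]_{i\in I}\vdash r:\sigma$ infer $\Gamma\wedge\Delta\wedge\Lambda\vdash t(u,y.r):\sigma$. $\Gamma\vdash^n t:\sigma$ means a derivation whose size is $n$, the size being the number of rule instances other than (many). *)

theory Defs
  imports Main "HOL-Library.Multiset"
begin

type_synonym var = nat

(* Terms of T_J as raw named terms; t(u, y.r) is App t u y r, y bound in r. *)
datatype trm = Var var | Lam var trm | App trm trm var trm

fun fv :: "trm \<Rightarrow> var set" where
  "fv (Var x) = {x}"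
| "fv (Lam x t) = fv t - {x}"
| "fv (App t u y r) = fv t \<union> fv u \<union> (fv r - {y})"

datatype lctx = Hole | LApp trm trm var lctx

fun plug :: "lctx \<Rightarrow> trm \<Rightarrow> trm" where
  "plug Hole s = s"
| "plug (LApp t u y D) s = App t u y (plug D s)"

fun lctx_binders :: "lctx \<Rightarrow> var set" where
  "lctx_binders Hole = {}"
| "lctx_binders (LApp t u y D) = {y} \<union> lctx_binders D"

fun lctx_fv :: "lctx \<Rightarrow> var set" where
  "lctx_fv Hole = {}"
| "lctx_fv (LApp t u y D) = fv t \<union> fv u \<union> lctx_fv D"

datatype ty = Atom nat | Arr "ty multiset" ty

type_synonym env = "var \<Rightarrow> ty multiset"

definition env_join :: "env \<Rightarrow> env \<Rightarrow> env" (infixl "\<and>\<^sub>e" 65) where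
  "env_join \<Gamma> \<Delta> = (\<lambda>z. \<Gamma> z + \<Delta> z)"

definition env_single :: "var \<Rightarrow> ty multiset \<Rightarrow> env" where
  "env_single x M = (\<lambda>z. if z = x then M else {#})"

definition ch :: "ty multiset \<Rightarrow> ty \<Rightarrow> ty multiset" where
  "ch M \<tau> = (if M = {#} then {#\<tau>#} else M)"

(* has_type G t s n  : G |-^n t : s ;  has_mtype G t M n : G |-^n t : M (via rule many,
   which is not counted in the size). A nonempty finite family for (many) is
   built up one premise at a time. In (app) the family (M_i, tau_i)_{i in I}
   is a multiset P of pairs. *)
inductive has_type :: "env \<Rightarrow> trm \<Rightarrow> ty \<Rightarrow> nat \<Rightarrow> bool"
  and has_mtype :: "env \<Rightarrow> trm \<Rightarrow> ty multiset \<Rightarrow> nat \<Rightarrow> bool" where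
  t_var: "has_type (env_single x {#\<sigma>#}) (Var x) \<sigma> 1"
| t_abs: "has_type (\<Gamma>(x := M)) t \<sigma> n \<Longrightarrow> \<Gamma> x = {#} \<Longrightarrow> has_type \<Gamma> (Lam x t) (Arr M \<sigma>) (Suc n)"
| t_many1: "has_type \<Gamma> t \<sigma> n \<Longrightarrow> has_mtype \<Gamma> t {#\<sigma>#} n"
| t_many2: "has_type \<Gamma> t \<sigma> n \<Longrightarrow> has_mtype \<Delta> t M m \<Longrightarrow> has_mtype (\<Gamma> \<and>\<^sub>e \<Delta>) t (add_mset \<sigma> M) (n + m)"
| t_app: "has_mtype \<Gamma> t (ch (image_mset (\<lambda>(M, \<tau>). Arr M \<tau>) P) \<rho>1) n1 \<Longrightarrow>
          has_mtype \<Delta> u (ch (sum_mset (image_mset fst P)) \<rho>2) n2 \<Longrightarrow>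
          has_type (\<Lambda>(y := image_mset snd P)) r \<sigma> n3 \<Longrightarrow> \<Lambda> y = {#} \<Longrightarrow>
          has_type (\<Gamma> \<and>\<^sub>e \<Delta> \<and>\<^sub>e \<Lambda>) (App t u y r) \<sigma> (Suc (n1 + n2 + n3))"

end

theory Submission
  imports Defs
begin

text \<open>In \<open>\<cap>J\<close> the rule (app) for \<open>t(u, y.r)\<close> splits the environment into a part for
  \<open>t\<close>, one for \<open>u\<close> and one for \<open>r\<close>.  Environments of derivations only mention free
  variables, so when \<open>x\<close> is not free in \<open>t\<close>, \<open>u\<close> the whole multiset \<open>M\<close> that (abs)
  discharges for \<open>x\<close> lives in the part for \<open>r\<close>.  Hence (abs) and (app) can be swapped,
  and since each counts once the size is unchanged.  Pushing the abstraction through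
  the list context one node at a time gives the theorem.\<close>

lemma has_type_env_support_fv:
  "has_type \<Gamma> t \<sigma> n \<Longrightarrow> \<Gamma> z \<noteq> {#} \<Longrightarrow> z \<in> fv t"
  "has_mtype \<Gamma> t M n \<Longrightarrow> \<Gamma> z \<noteq> {#} \<Longrightarrow> z \<in> fv t"
proof (induction arbitrary: z and z rule: has_type_has_mtype.inducts)
  case (t_var x \<sigma>)
  then show ?case by (auto simp: env_single_def split: if_splits)
next
  case (t_abs \<Gamma> x M t \<sigma> n)
  then show ?case by (cases "z = x") auto
next
  case (t_many1 \<Gamma> t \<sigma> n)
  then show ?case by auto
next
  case (t_many2 \<Gamma> t \<sigma> n \<Delta> M m)
  then show ?case by (auto simp: env_join_def)
next
  case (t_app \<Gamma> t P \<rho>1 n1 \<Delta> u \<rho>2 n2 \<Lambda> y r \<sigma> n3)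
  then show ?case by (cases "z = y") (auto simp: env_join_def)
qed

lemma has_mtype_env_fresh:
  "has_mtype \<Gamma> t M n \<Longrightarrow> x \<notin> fv t \<Longrightarrow> \<Gamma> x = {#}"
  using has_type_env_support_fv(2) by blast

inductive_cases has_type_AppE: "has_type \<Gamma> (App t u y r) \<sigma> n"
inductive_cases has_type_LamE: "has_type \<Gamma> (Lam x t) \<sigma> n"

lemma has_type_App_body_cong:
  assumes "\<And>\<Gamma> \<sigma> n. has_type \<Gamma> r \<sigma> n \<longleftrightarrow> has_type \<Gamma> r' \<sigma> n"
  shows "has_type \<Gamma> (App t u y r) \<sigma> n \<longleftrightarrow> has_type \<Gamma> (App t u y r') \<sigma> n"
proof -
  have "has_type \<Gamma> (App t u y s') \<sigma> n"
    if "has_type \<Gamma> (App t u y s) \<sigma> n" and "\<And>\<Gamma> \<sigma> n. has_type \<Gamma> s \<sigma> n \<Longrightarrow> has_type \<Gamma> s' \<sigma> n"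
    for s s'
    using that(1)
  proof (rule has_type_AppE)
    fix \<Gamma>1 P \<rho>1 n1 \<Gamma>2 \<rho>2 n2 \<Lambda> n3
    assume "\<Gamma> = \<Gamma>1 \<and>\<^sub>e \<Gamma>2 \<and>\<^sub>e \<Lambda>" "n = Suc (n1 + n2 + n3)"
      and "has_mtype \<Gamma>1 t (ch (image_mset (\<lambda>(M, \<tau>). Arr M \<tau>) P) \<rho>1) n1"
      and "has_mtype \<Gamma>2 u (ch (sum_mset (image_mset fst P)) \<rho>2) n2"
      and "has_type (\<Lambda>(y := image_mset snd P)) s \<sigma> n3" "\<Lambda> y = {#}"
    then show ?thesis by (metis t_app that(2))
  qed
  with assms show ?thesis by blast
qed

lemma has_type_App_Lam_imp_Lam_App:
  assumes typed: "has_type \<Gamma> (App t u y (Lam x r)) \<sigma> n"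
    and "x \<noteq> y" "x \<notin> fv t" "x \<notin> fv u"
  shows "has_type \<Gamma> (Lam x (App t u y r)) \<sigma> n"
  using typed
proof (rule has_type_AppE)
  fix \<Gamma>1 P \<rho>1 n1 \<Gamma>2 \<rho>2 n2 \<Lambda> n3
  assume \<Gamma>: "\<Gamma> = \<Gamma>1 \<and>\<^sub>e \<Gamma>2 \<and>\<^sub>e \<Lambda>" and n: "n = Suc (n1 + n2 + n3)"
    and t: "has_mtype \<Gamma>1 t (ch (image_mset (\<lambda>(M, \<tau>). Arr M \<tau>) P) \<rho>1) n1"
    and u: "has_mtype \<Gamma>2 u (ch (sum_mset (image_mset fst P)) \<rho>2) n2"
    and body: "has_type (\<Lambda>(y := image_mset snd P)) (Lam x r) \<sigma> n3" and \<Lambda>y: "\<Lambda> y = {#}"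
  from body obtain M \<tau> k where \<sigma>: "\<sigma> = Arr M \<tau>" and n3: "n3 = Suc k"
    and r: "has_type (\<Lambda>(y := image_mset snd P, x := M)) r \<tau> k" and \<Lambda>x: "\<Lambda> x = {#}"
    by (rule has_type_LamE) (use \<open>x \<noteq> y\<close> in auto)
  have \<Gamma>1x: "\<Gamma>1 x = {#}" and \<Gamma>2x: "\<Gamma>2 x = {#}"
    using has_mtype_env_fresh t u \<open>x \<notin> fv t\<close> \<open>x \<notin> fv u\<close> by blast+
  have "\<Lambda>(y := image_mset snd P, x := M) = \<Lambda>(x := M, y := image_mset snd P)"
    using \<open>x \<noteq> y\<close> by (simp add: fun_upd_twist)
  with r have "has_type (\<Gamma>1 \<and>\<^sub>e \<Gamma>2 \<and>\<^sub>e \<Lambda>(x := M)) (App t u y r) \<tau> (Suc (n1 + n2 + k))"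
    using t_app[OF t u] \<Lambda>y \<open>x \<noteq> y\<close> by simp
  moreover have "\<Gamma>1 \<and>\<^sub>e \<Gamma>2 \<and>\<^sub>e \<Lambda>(x := M) = \<Gamma>(x := M)"
    using \<Gamma> \<Gamma>1x \<Gamma>2x by (auto simp: env_join_def)
  moreover have "\<Gamma> x = {#}"
    using \<Gamma> \<Gamma>1x \<Gamma>2x \<Lambda>x by (simp add: env_join_def)
  ultimately show ?thesis
    using t_abs \<sigma> n n3 by fastforce
qed

lemma has_type_Lam_App_imp_App_Lam:
  assumes typed: "has_type \<Gamma> (Lam x (App t u y r)) \<sigma> n"
    and "x \<noteq> y" "x \<notin> fv t" "x \<notin> fv u"
  shows "has_type \<Gamma> (App t u y (Lam x r)) \<sigma> n"
proof -
  from typed obtain M \<tau> k where \<sigma>: "\<sigma> = Arr M \<tau>" and n: "n = Suc k"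
    and app: "has_type (\<Gamma>(x := M)) (App t u y r) \<tau> k" and \<Gamma>x: "\<Gamma> x = {#}"
    by (rule has_type_LamE) blast
  from app obtain \<Gamma>1 P \<rho>1 n1 \<Gamma>2 \<rho>2 n2 \<Lambda> n3 where
    \<Gamma>: "\<Gamma>(x := M) = \<Gamma>1 \<and>\<^sub>e \<Gamma>2 \<and>\<^sub>e \<Lambda>" and k: "k = Suc (n1 + n2 + n3)"
    and t: "has_mtype \<Gamma>1 t (ch (image_mset (\<lambda>(M, \<tau>). Arr M \<tau>) P) \<rho>1) n1"
    and u: "has_mtype \<Gamma>2 u (ch (sum_mset (image_mset fst P)) \<rho>2) n2"
    and r: "has_type (\<Lambda>(y := image_mset snd P)) r \<tau> n3" and \<Lambda>y: "\<Lambda> y = {#}"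
    by (rule has_type_AppE) blast
  have \<Gamma>1x: "\<Gamma>1 x = {#}" and \<Gamma>2x: "\<Gamma>2 x = {#}"
    using has_mtype_env_fresh t u \<open>x \<notin> fv t\<close> \<open>x \<notin> fv u\<close> by blast+
  have \<Lambda>x: "\<Lambda> x = M"
    using fun_cong[OF \<Gamma>, of x] \<Gamma>1x \<Gamma>2x by (simp add: env_join_def)
  have "\<Lambda>(x := {#}, y := image_mset snd P, x := M) = \<Lambda>(y := image_mset snd P)"
    using \<open>x \<noteq> y\<close> \<Lambda>x by (auto simp: fun_eq_iff)
  with r have lam: "has_type (\<Lambda>(x := {#}, y := image_mset snd P)) (Lam x r) (Arr M \<tau>) (Suc n3)"
    using t_abs \<open>x \<noteq> y\<close> by fastforce
  have "has_type (\<Gamma>1 \<and>\<^sub>e \<Gamma>2 \<and>\<^sub>e \<Lambda>(x := {#})) (App t u y (Lam x r)) (Arr M \<tau>)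
      (Suc (n1 + n2 + Suc n3))"
    by (rule t_app[OF t u lam]) (use \<Lambda>y \<open>x \<noteq> y\<close> in simp)
  moreover have "\<Gamma>1 \<and>\<^sub>e \<Gamma>2 \<and>\<^sub>e \<Lambda>(x := {#}) = \<Gamma>"
  proof
    fix z show "(\<Gamma>1 \<and>\<^sub>e \<Gamma>2 \<and>\<^sub>e \<Lambda>(x := {#})) z = \<Gamma> z"
      using fun_cong[OF \<Gamma>, of z] \<Gamma>x \<Gamma>1x \<Gamma>2x by (cases "z = x") (auto simp: env_join_def)
  qed
  ultimately show ?thesis
    using \<sigma> n k by simp
qed

lemma has_type_App_Lam_iff_Lam_App:
  assumes "x \<noteq> y" "x \<notin> fv t" "x \<notin> fv u"
  shows "has_type \<Gamma> (App t u y (Lam x r)) \<sigma> n \<longleftrightarrow> has_type \<Gamma> (Lam x (App t u y r)) \<sigma> n"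
  using assms has_type_App_Lam_imp_Lam_App has_type_Lam_App_imp_App_Lam by blast

lemma has_type_plug_Lam_iff_Lam_plug:
  assumes "x \<notin> lctx_binders D" and "x \<notin> lctx_fv D"
  shows "has_type \<Gamma> (plug D (Lam x t)) \<sigma> n \<longleftrightarrow> has_type \<Gamma> (Lam x (plug D t)) \<sigma> n"
  using assms
proof (induction D arbitrary: \<Gamma> \<sigma> n)
  case Hole
  then show ?case by simp
next
  case (LApp t0 u0 y D)
  then have "has_type \<Gamma> (App t0 u0 y (plug D (Lam x t))) \<sigma> n
      \<longleftrightarrow> has_type \<Gamma> (App t0 u0 y (Lam x (plug D t))) \<sigma> n"
    by (intro has_type_App_body_cong) simp
  also have "\<dots> \<longleftrightarrow> has_type \<Gamma> (Lam x (App t0 u0 y (plug D t))) \<sigma> n"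
    using LApp.prems by (intro has_type_App_Lam_iff_Lam_App) auto
  finally show ?case by simp
qed

theorem mainTheorem7:
  fixes t :: trm and D :: lctx and \<Gamma> :: env and \<sigma> :: ty and n :: nat and x :: var
  assumes "finite {z. \<Gamma> z \<noteq> {#}}"
    and "x \<notin> lctx_binders D"
    and "x \<notin> lctx_fv D"
  shows "has_type \<Gamma> (plug D (Lam x t)) \<sigma> n \<longleftrightarrow> has_type \<Gamma> (Lam x (plug D t)) \<sigma> n"
  using assms(2,3) by (rule has_type_plug_Lam_iff_Lam_plug)

end
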